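(* Let $$B_1(x,y)=\frac{16-7x^2+8x-14xy+8y-7y^2}{16\sqrt{(2-x)(2-x-y)x}}.$$ If $0<y<x\le1$, then $B_1(x,y)>1$. *)

theory Defs
  imports Complex_Main
begin

definition B1 :: "real \<Rightarrow> real \<Rightarrow> real" where
  "B1 x y = (16 - 7*x^2 + 8*x - 14*x*y + 8*y - 7*y^2) / (16 * sqrt ((2 - x) * (2 - x - y) * x))"

end

theory Submission
  imports Defs
begin

text \<open>With \<open>s = x + y\<close> the numerator of \<open>B1 x y\<close> is \<open>16 + 8 s - 7 s\<^sup>2\<close> and the
  radicand is \<open>x (2 - x) (2 - s)\<close>, so it suffices to compare the squares. Since
  \<open>u (2 - u)\<close> increases on \<open>[0, 1]\<close> and is at most \<open>1\<close>, the factor \<open>x (2 - x)\<close> is bounded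
  by \<open>s (2 - s)\<close> when \<open>s \<le> 1\<close> and by \<open>1\<close> otherwise. This leaves two quartic inequalities
  in \<open>s\<close> alone, certified by their nonnegative Bernstein coefficients.\<close>

lemma bernstein_quartic_pos:
  fixes u b0 b1 b2 b3 b4 :: real
  assumes "0 \<le> u" "u \<le> 1"
    and "0 < b0" "0 \<le> b1" "0 \<le> b2" "0 \<le> b3" "0 < b4"
  shows "0 < b0*(1-u)^4 + b1*(u*(1-u)^3) + b2*(u^2*(1-u)^2) + b3*(u^3*(1-u)) + b4*u^4"
proof -
  have "0 < b0*(1-u)^4 + b4*u^4"
    using assms by (cases "u = 0") (auto intro: add_pos_nonneg add_nonneg_pos)
  moreover have "0 \<le> b1*(u*(1-u)^3) + b2*(u^2*(1-u)^2) + b3*(u^3*(1-u))"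
    using assms by simp
  ultimately show ?thesis by linarith
qed

lemma radicand_bound_small_sum:
  fixes s :: real
  assumes "0 \<le> s" "s \<le> 1"
  shows "256 * s * (2 - s)^2 < (16 + 8*s - 7*s^2)^2"
proof -
  have "(16 + 8*s - 7*s^2)^2 - 256 * s * (2 - s)^2 =
      256*(1-s)^4 + 256*(s*(1-s)^3) + 96*(s^2*(1-s)^2) + 80*(s^3*(1-s)) + 33*s^4"
    by algebra
  then show ?thesis using bernstein_quartic_pos[OF assms, of 256 256 96 80 33] by linarith
qed

lemma radicand_bound_large_sum:
  fixes s :: real
  assumes "1 \<le> s" "s \<le> 2"
  shows "256 * (2 - s) < (16 + 8*s - 7*s^2)^2"
proof -
  \<comment> \<open>On all of \<open>[1, 2]\<close> one Bernstein coefficient is negative; on each half they are not.\<close>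
  consider "0 \<le> 2*s - 2" "2*s - 2 \<le> 1" | "0 \<le> 2*s - 3" "2*s - 3 \<le> 1"
    using assms by linarith
  then show ?thesis
  proof cases
    case 1
    have "(16 + 8*s - 7*s^2)^2 - 256 * (2 - s) =
        33*(1-u)^4 + 158*(u*(1-u)^3) + 451/2*(u^2*(1-u)^2) + 239/2*(u^3*(1-u)) + 353/16*u^4"
      if "u = 2*s - 2" for u
      unfolding that by algebra
    then show ?thesis using bernstein_quartic_pos[OF 1, of 33 158 "451/2" "239/2" "353/16"]
      by fastforce
  next
    case 2
    have "(16 + 8*s - 7*s^2)^2 - 256 * (2 - s) =
        353/16*(1-u)^4 + 57*(u*(1-u)^3) + 38*(u^2*(1-u)^2) + 16*(u^3*(1-u)) + 16*u^4"
      if "u = 2*s - 3" for u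
      unfolding that by algebra
    then show ?thesis using bernstein_quartic_pos[OF 2, of "353/16" 57 38 16 16]
      by fastforce
  qed
qed

lemma mult_two_minus_mono:
  fixes x s :: real
  assumes "x \<le> s" "x + s \<le> 2"
  shows "x * (2 - x) \<le> s * (2 - s)"
proof -
  have "0 \<le> (s - x) * (2 - x - s)" using assms by simp
  then show ?thesis by (simp add: algebra_simps)
qed

lemma mult_two_minus_le_one:
  fixes x :: real
  shows "x * (2 - x) \<le> 1"
proof -
  have "0 \<le> (x - 1)^2" by simp
  then show ?thesis by (simp add: power2_eq_square algebra_simps)
qed

lemma B1_numerator_pos:
  fixes x y :: real
  assumes "0 < y" "y < x" "x \<le> 1"
  shows "0 < 16 - 7*x^2 + 8*x - 14*x*y + 8*y - 7*y^2"
proof -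
  have "(x + y) * (x + y) < 2 * (x + y)" using assms by (intro mult_strict_right_mono) auto
  then show ?thesis using assms by (simp add: power2_eq_square algebra_simps)
qed

lemma B1_radicand_bound:
  fixes x y :: real
  assumes "0 < y" "y < x" "x \<le> 1"
  shows "256 * ((2 - x) * (2 - x - y) * x) < (16 - 7*x^2 + 8*x - 14*x*y + 8*y - 7*y^2)^2"
proof -
  define s where "s = x + y"
  have s: "0 < s" "s < 2" using assms by (auto simp: s_def)
  have radicand: "(2 - x) * (2 - x - y) * x = x * (2 - x) * (2 - s)"
    by (simp add: s_def algebra_simps)
  have numerator: "16 - 7*x^2 + 8*x - 14*x*y + 8*y - 7*y^2 = 16 + 8*s - 7*s^2"
    by (simp add: s_def power2_eq_square algebra_simps)
  show ?thesis
  proof (cases "s \<le> 1")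
    case True
    have "x * (2 - x) * (2 - s) \<le> s * (2 - s) * (2 - s)"
      using mult_two_minus_mono[of x s] assms s True by (intro mult_right_mono) (auto simp: s_def)
    then have "x * (2 - x) * (2 - s) \<le> s * (2 - s)^2"
      by (simp add: power2_eq_square mult.assoc)
    then show ?thesis
      using radicand_bound_small_sum[of s] True s unfolding radicand numerator by linarith
  next
    case False
    have "x * (2 - x) * (2 - s) \<le> 1 * (2 - s)"
      using mult_two_minus_le_one[of x] s by (intro mult_right_mono) auto
    then show ?thesis
      using radicand_bound_large_sum[of s] False s unfolding radicand numerator by linarith
  qed
qed

theorem lemma3:
  fixes x y :: real
  assumes "0 < y" and "y < x" and "x \<le> 1"
  shows "B1 x y > 1"
proof -
  define N where "N = 16 - 7*x^2 + 8*x - 14*x*y + 8*y - 7*y^2"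
  define P where "P = (2 - x) * (2 - x - y) * x"
  have "0 < P" using assms by (simp add: P_def)
  have "256 * P < N^2"
    using B1_radicand_bound[OF assms] by (simp add: N_def P_def)
  then have "sqrt (256 * P) < \<bar>N\<bar>"
    using real_sqrt_less_mono by fastforce
  moreover have "0 < N"
    using B1_numerator_pos[OF assms] by (simp add: N_def)
  ultimately have "16 * sqrt P < N"
    by (simp add: real_sqrt_mult)
  then show ?thesis
    using \<open>0 < P\<close> unfolding B1_def N_def[symmetric] P_def[symmetric] by simp
qed

end
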